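(* Let $(p_n)_{n\ge1}$ be nonnegative reals with $\sum_{n\ge1}p_n=1$ and let $g(r)=\sum_{n\ge1}p_nr^n$ for $r\in[-1,1]$. Let $R=(r_{ij})_{1\le i,j\le d}$ be a real symmetric positive semi-definite $d\times d$ matrix with unit diagonal. Let $(\epsilon_n)_{n\ge1}$ be any sequence with $\epsilon_n\in\{-1,1\}$, and define $f(x)=\sum_{n\ge1}\epsilon_n\sqrt{p_n}\frac{H_n(x)}{\sqrt{n!}}$, where $(H_n)$ are the Hermite polynomials defined by $e^{xt-t^2/2}=\sum_{n\ge0}H_n(x)\frac{t^n}{n!}$ (the series converging in $L^2$ of the standard normal distribution). Let $(X_1,\dots,X_d)$ be centered Gaussian with covariance matrix $R$. Then the matrix $R^*=(g(r_{ij}))_{1\le i,j\le d}$ is both the covariance matrix and the correlation matrix of $(f(X_1),\dots,f(X_d))$. *)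

theory Defs
  imports "HOL-Probability.Probability"
begin

text \<open>Hermite polynomials via the generating function
  exp(x t - t^2/2) = sum_n H_n(x) t^n / n!, i.e. H_n(x) is the n-th derivative
  in t of exp(x t - t^2/2) at t = 0.\<close>
definition hermite :: "nat \<Rightarrow> real \<Rightarrow> real" where
  "hermite n x = (deriv ^^ n) (\<lambda>t. exp (x * t - t\<^sup>2 / 2)) 0"

definition covariance :: "'a measure \<Rightarrow> ('a \<Rightarrow> real) \<Rightarrow> ('a \<Rightarrow> real) \<Rightarrow> real" where
  "covariance M U V =
     (\<integral>\<omega>. (U \<omega> - (\<integral>\<omega>'. U \<omega>' \<partial>M)) * (V \<omega> - (\<integral>\<omega>'. V \<omega>' \<partial>M)) \<partial>M)"

definition correlation :: "'a measure \<Rightarrow> ('a \<Rightarrow> real) \<Rightarrow> ('a \<Rightarrow> real) \<Rightarrow> real" where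
  "correlation M U V = covariance M U V / sqrt (covariance M U U * covariance M V V)"

text \<open>(X_1,...,X_d) is a centered Gaussian vector with covariance matrix R
  (entries indexed by 1..d), characterised by its characteristic function
  E[exp(i <t,X>)] = exp(-t^T R t / 2); this covers degenerate R.\<close>
definition centered_gaussian_vector ::
  "'a measure \<Rightarrow> nat \<Rightarrow> (nat \<Rightarrow> 'a \<Rightarrow> real) \<Rightarrow> (nat \<Rightarrow> nat \<Rightarrow> real) \<Rightarrow> bool" where
  "centered_gaussian_vector M d X R \<longleftrightarrow>
     prob_space M \<and>
     (\<forall>i\<in>{1..d}. X i \<in> borel_measurable M) \<and>
     (\<forall>t :: nat \<Rightarrow> real.
        (CLINT \<omega>|M. cis (\<Sum>j\<in>{1..d}. t j * X j \<omega>)) =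
        complex_of_real (exp (- (\<Sum>i\<in>{1..d}. \<Sum>j\<in>{1..d}. t i * t j * R i j) / 2)))"

end

theory Submission
  imports Defs "HOL-Computational_Algebra.Polynomial" "HOL-Computational_Algebra.Formal_Power_Series"
begin

(* Let H^v_n be the Hermite polynomials of variance v, with exponential generating function
   exp(x t - v t^2/2), so that hermite n = H^1_n.  Multiplying generating functions gives the
   addition formula H^(u^2+1)_n(u w + y) = sum_m (n choose m) u^m H_m(w) H_(n-m)(y).  If (Y, W) is
   a standard Gaussian pair with correlation rho, then Y + u W is centered normal with variance
   1 + 2 u rho + u^2, and Gaussian integration by parts gives E[H^v_n(s Z)] = E[Z^n] (s^2 - v)^(n/2).
   Both sides of the addition formula, integrated, are polynomials in u; comparing coefficients
   yields the orthogonality relation E[H_k(Y) H_l(W)] = [k = l] k! rho^k.  Hence the truncated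
   Hermite series f_K of f satisfy E[f_K(X_i) f_K(X_j)] = sum_(n<=K) p_n r_ij^n, and since f_K -> f
   in L^2 the same holds in the limit, giving E[f(X_i) f(X_j)] = g(r_ij).  The expansion has no
   H_0 term, so f(X_i) is centered, and g(1) = 1 makes the covariance a correlation. *)

section \<open>Hermite polynomials with a variance parameter\<close>

fun hermite_poly :: "real \<Rightarrow> nat \<Rightarrow> real poly" where
  "hermite_poly v 0 = 1"
| "hermite_poly v (Suc 0) = [:0, 1:]"
| "hermite_poly v (Suc (Suc n)) =
     [:0, 1:] * hermite_poly v (Suc n) - smult (v * of_nat (Suc n)) (hermite_poly v n)"

lemma pderiv_hermite_poly:
  "pderiv (hermite_poly v (Suc n)) = smult (of_nat (Suc n)) (hermite_poly v n)"
proof (induction n rule: induct_nat_012)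
  case (ge2 n)
  have "pderiv (hermite_poly v (Suc (Suc (Suc n)))) =
      hermite_poly v (Suc (Suc n)) + [:0, 1:] * pderiv (hermite_poly v (Suc (Suc n)))
      - smult (v * of_nat (Suc (Suc n))) (pderiv (hermite_poly v (Suc n)))"
    by (simp only: hermite_poly.simps pderiv_diff pderiv_mult pderiv_smult) (simp add: pderiv_pCons)
  also have "\<dots> = hermite_poly v (Suc (Suc n)) + smult (of_nat (Suc (Suc n))) (hermite_poly v (Suc (Suc n)))"
    using ge2 by (simp del: of_nat_Suc add: algebra_simps smult_diff_right)
  finally show ?case by (simp only: of_nat_Suc[of "Suc (Suc n)"] smult_add_left smult_1_left)
qed (simp_all add: pderiv_pCons)

lemma hermite_poly_Suc:
  "hermite_poly v (Suc n) = [:0, 1:] * hermite_poly v n - smult v (pderiv (hermite_poly v n))"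
  by (cases n) (simp_all add: pderiv_hermite_poly)

lemma hermite_eq_poly_hermite_poly: "hermite n x = poly (hermite_poly 1 n) x"
proof -
  have "(deriv ^^ n) (\<lambda>t. exp (x * t - t\<^sup>2 / 2)) =
      (\<lambda>t. poly (hermite_poly 1 n) (x - t) * exp (x * t - t\<^sup>2 / 2))"
  proof (induction n)
    case 0
    then show ?case by simp
  next
    case (Suc n)
    have "((\<lambda>t. poly (hermite_poly 1 n) (x - t) * exp (x * t - t\<^sup>2 / 2)) has_real_derivative
        poly (hermite_poly 1 (Suc n)) (x - t) * exp (x * t - t\<^sup>2 / 2)) (at t)" for t
      unfolding hermite_poly_Suc
      by (auto intro!: derivative_eq_intros DERIV_chain2[OF poly_DERIV] simp: algebra_simps)
    then show ?case
      by (simp only: funpow.simps comp_apply Suc.IH) (simp add: fun_eq_iff DERIV_imp_deriv)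
  qed
  then show ?thesis by (simp add: hermite_def)
qed

lemma fps_deriv_egf_three_term_recurrence:
  fixes A :: "nat \<Rightarrow> 'a::field_char_0"
  assumes "A 1 = a * A 0"
    and "\<And>n. A (Suc (Suc n)) = a * A (Suc n) - b * of_nat (Suc n) * A n"
  shows "fps_deriv (Abs_fps (\<lambda>n. A n / fact n)) =
         (fps_const a - fps_const b * fps_X) * Abs_fps (\<lambda>n. A n / fact n)"
proof (rule fps_ext)
  fix n
  show "fps_nth (fps_deriv (Abs_fps (\<lambda>n. A n / fact n))) n =
        fps_nth ((fps_const a - fps_const b * fps_X) * Abs_fps (\<lambda>n. A n / fact n)) n"
  proof (cases n)
    case 0
    then show ?thesis using assms(1) by (simp add: algebra_simps fps_X_mult_nth)
  next
    case (Suc m)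
    then show ?thesis using assms(2)[of m]
      by (simp add: fps_X_mult_nth field_simps del: of_nat_Suc)
  qed
qed

lemma fps_linear_ode_unique:
  fixes F G C :: "'a::field_char_0 fps"
  assumes "fps_deriv F = C * F" "fps_deriv G = C * G" "fps_nth F 0 = fps_nth G 0"
  shows "F = G"
proof -
  define D where "D = F - G"
  have D': "fps_deriv D = C * D" and D0: "fps_nth D 0 = 0"
    using assms by (simp_all add: D_def algebra_simps)
  have "fps_nth D n = 0" for n
  proof (induction n rule: less_induct)
    case (less n)
    show ?case
    proof (cases n)
      case (Suc m)
      have "of_nat (Suc m) * fps_nth D (Suc m) = (\<Sum>i=0..m. fps_nth C i * fps_nth D (m - i))"
        using arg_cong[OF D', of "\<lambda>F. fps_nth F m"] by (simp add: fps_mult_nth)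
      also have "\<dots> = 0"
        using less Suc by (intro sum.neutral) auto
      finally show ?thesis using Suc by (simp flip: of_nat_Suc)
    qed (use D0 in simp)
  qed
  then show ?thesis by (simp add: D_def fps_eq_iff)
qed

lemma poly_hermite_poly_add:
  "poly (hermite_poly (v + w) n) (x + y) =
   (\<Sum>i\<le>n. of_nat (n choose i) * poly (hermite_poly v i) x * poly (hermite_poly w (n - i)) y)"
proof -
  define E where "E v x = Abs_fps (\<lambda>n. poly (hermite_poly v n) x / fact n)" for v x
  have E': "fps_deriv (E v x) = (fps_const x - fps_const v * fps_X) * E v x" for v x
    unfolding E_def by (rule fps_deriv_egf_three_term_recurrence) (simp_all add: algebra_simps)
  have "fps_deriv (E v x * E w y) =
      (fps_const (x + y) - fps_const (v + w) * fps_X) * (E v x * E w y)"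
    by (simp add: fps_deriv_mult E' algebra_simps flip: fps_const_add)
  then have "E v x * E w y = E (v + w) (x + y)"
    by (rule fps_linear_ode_unique[OF _ E']) (simp add: E_def)
  then have "poly (hermite_poly (v + w) n) (x + y) / fact n =
      (\<Sum>i\<le>n. poly (hermite_poly v i) x / fact i * (poly (hermite_poly w (n - i)) y / fact (n - i)))"
    by (auto simp: E_def fps_eq_iff fps_mult_nth atLeast0AtMost)
  then show ?thesis
    by (simp add: field_simps sum_distrib_left binomial_fact)
qed

lemma poly_hermite_poly_scale:
  "poly (hermite_poly (u\<^sup>2) n) (u * y) = u ^ n * poly (hermite_poly 1 n) y"
proof (induction n rule: induct_nat_012)
  case (ge2 n)
  then show ?case by (simp add: algebra_simps power2_eq_square)
qed simp_all

section \<open>Gaussian integrals of Hermite polynomials\<close>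

lemma prob_space_std_normal_distribution: "prob_space std_normal_distribution"
  using real_dist_normal_dist by (simp add: real_distribution_def)

lemma integrable_std_normal_distribution_poly: "integrable std_normal_distribution (\<lambda>x. poly q x)"
  unfolding poly_altdef
  by (intro Bochner_Integration.integrable_sum integrable_mult_right
      integrable_std_normal_distribution_moment)

lemma borel_measurable_poly [measurable]: "(\<lambda>x. poly p x :: real) \<in> borel_measurable borel"
  by (intro borel_measurable_continuous_onI continuous_intros)

lemma integral_std_normal_distribution_moment_Suc:
  "(\<integral>x. x * x ^ k \<partial>std_normal_distribution) =
   of_nat k * (\<integral>x. x ^ (k - 1) \<partial>std_normal_distribution)"
proof (cases "even k")
  case True
  then obtain j where k: "k = 2 * j" by blast
  have "odd (k - 1)" if "k \<noteq> 0" using that k by simp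
  then show ?thesis
    using integral_std_normal_distribution_moment_odd[of "Suc k"] k
      integral_std_normal_distribution_moment_odd[of "k - 1"] by auto
next
  case False
  then obtain j where k: "k = 2 * j + 1" by (metis oddE)
  have "(\<integral>x. x * x ^ k \<partial>std_normal_distribution) = fact (2 * Suc j) / (2 ^ Suc j * fact (Suc j))"
    using std_normal_distribution_even_moments(1)[of "Suc j"] k by simp
  also have "\<dots> = of_nat (2 * j + 1) * (fact (2 * j) / (2 ^ j * fact j))"
  proof -
    have "fact (2 * Suc j) = of_nat (2 * j + 2) * (of_nat (2 * j + 1) * (fact (2 * j) :: real))"
      by (simp only: mult_Suc_right fact_Suc) simp
    moreover have "(2::real) ^ Suc j * fact (Suc j) = of_nat (2 * j + 2) * (2 ^ j * fact j)"
      by (simp add: algebra_simps)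
    ultimately show ?thesis by (simp only: mult_divide_mult_cancel_left_if) simp
  qed
  finally show ?thesis
    using std_normal_distribution_even_moments(1)[of j] k by simp
qed

lemma poly_pderiv_eq_sum:
  fixes q :: "real poly"
  shows "poly (pderiv q) x = (\<Sum>i\<le>degree q. coeff q i * (of_nat i * x ^ (i - 1)))"
proof -
  have "(poly q has_real_derivative (\<Sum>i\<le>degree q. coeff q i * (of_nat i * x ^ (i - 1)))) (at x)"
    unfolding poly_altdef by (auto intro!: derivative_eq_intros simp: mult_ac)
  then show ?thesis
    using poly_DERIV DERIV_unique by blast
qed

lemma std_normal_distribution_stein_poly:
  fixes q :: "real poly"
  shows "(\<integral>x. x * poly q x \<partial>std_normal_distribution) = (\<integral>x. poly (pderiv q) x \<partial>std_normal_distribution)"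
proof -
  have "(\<integral>x. x * poly q x \<partial>std_normal_distribution) =
      (\<integral>x. (\<Sum>i\<le>degree q. coeff q i * (x * x ^ i)) \<partial>std_normal_distribution)"
    by (simp add: poly_altdef sum_distrib_left mult.left_commute)
  also have "\<dots> = (\<Sum>i\<le>degree q. coeff q i * (\<integral>x. x * x ^ i \<partial>std_normal_distribution))"
    by (subst Bochner_Integration.integral_sum) (auto intro!: integrable_mult_right
        simp: integrable_std_normal_distribution_moment power_Suc[symmetric] simp del: power_Suc)
  also have "\<dots> = (\<integral>x. (\<Sum>i\<le>degree q. coeff q i * (of_nat i * x ^ (i - 1))) \<partial>std_normal_distribution)"
    by (subst Bochner_Integration.integral_sum)
      (auto intro!: integrable_mult_right simp: integrable_std_normal_distribution_moment
        integral_std_normal_distribution_moment_Suc)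
  finally show ?thesis by (simp add: poly_pderiv_eq_sum)
qed

lemma integral_std_normal_distribution_hermite_poly_scaled:
  "(\<integral>x. poly (hermite_poly v n) (s * x) \<partial>std_normal_distribution) =
   (\<integral>x. x ^ n \<partial>std_normal_distribution) * (s\<^sup>2 - v) ^ (n div 2)"
proof (induction n rule: induct_nat_012)
  case 0
  then show ?case
    using prob_space.prob_space[OF prob_space_std_normal_distribution] by simp
next
  case (ge2 n)
  define I where "I k = (\<integral>x. poly (hermite_poly v k) (s * x) \<partial>std_normal_distribution)" for k
  have integrable: "integrable std_normal_distribution (\<lambda>x. poly q (s * x))" for q
    using integrable_std_normal_distribution_poly[of "pcompose q [:0, s:]"] by (simp add: poly_pcompose mult_ac)
  have stein: "(\<integral>x. x * poly (hermite_poly v (Suc n)) (s * x) \<partial>std_normal_distribution) =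
      s * of_nat (Suc n) * I n"
    using std_normal_distribution_stein_poly[of "pcompose (hermite_poly v (Suc n)) [:0, s:]"]
    by (simp add: I_def poly_pcompose pderiv_pcompose pderiv_pCons pderiv_hermite_poly mult_ac)
  have "I (Suc (Suc n)) = (\<integral>x. s * (x * poly (hermite_poly v (Suc n)) (s * x))
      - v * of_nat (Suc n) * poly (hermite_poly v n) (s * x) \<partial>std_normal_distribution)"
    by (simp add: I_def algebra_simps)
  also have "\<dots> = s * (\<integral>x. x * poly (hermite_poly v (Suc n)) (s * x) \<partial>std_normal_distribution)
      - v * of_nat (Suc n) * I n"
    using integrable[of "[:0, 1:] * hermite_poly v (Suc n)"] integrable[of "hermite_poly v n"]
    by (simp add: I_def mult.assoc)
  also have "\<dots> = s\<^sup>2 * of_nat (Suc n) * I n - v * of_nat (Suc n) * I n"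
    by (simp add: stein power2_eq_square)
  also have "\<dots> = of_nat (Suc n) * (\<integral>x. x ^ n \<partial>std_normal_distribution) * (s\<^sup>2 - v) ^ Suc (n div 2)"
    using ge2.IH(1) by (simp add: I_def algebra_simps)
  also have "\<dots> = (\<integral>x. x ^ Suc (Suc n) \<partial>std_normal_distribution) * (s\<^sup>2 - v) ^ (Suc (Suc n) div 2)"
    using integral_std_normal_distribution_moment_Suc[of "Suc n"] by simp
  finally show ?case by (simp add: I_def)
qed (use integral_std_normal_distribution_moment_odd[of 1] in simp)

section \<open>Convergence in mean square\<close>

lemma integrable_mult_of_square_integrable:
  fixes a b :: "'a \<Rightarrow> real"
  assumes [measurable]: "a \<in> borel_measurable M" "b \<in> borel_measurable M"
    and "integrable M (\<lambda>\<omega>. (a \<omega>)\<^sup>2)" "integrable M (\<lambda>\<omega>. (b \<omega>)\<^sup>2)"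
  shows "integrable M (\<lambda>\<omega>. a \<omega> * b \<omega>)"
proof (rule Bochner_Integration.integrable_bound)
  show "integrable M (\<lambda>\<omega>. (a \<omega>)\<^sup>2 + (b \<omega>)\<^sup>2)"
    using assms(3,4) by simp
  have "\<bar>x * y\<bar> \<le> x\<^sup>2 + y\<^sup>2" for x y :: real
  proof -
    have "2 * (\<bar>x\<bar> * \<bar>y\<bar>) \<le> x\<^sup>2 + y\<^sup>2"
      using sum_squares_bound[of "\<bar>x\<bar>" "\<bar>y\<bar>"] by (simp add: mult.assoc)
    moreover have "0 \<le> \<bar>x\<bar> * \<bar>y\<bar>" by simp
    ultimately show ?thesis unfolding abs_mult by linarith
  qed
  then show "AE \<omega> in M. norm (a \<omega> * b \<omega>) \<le> norm ((a \<omega>)\<^sup>2 + (b \<omega>)\<^sup>2)"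
    by simp
qed simp

lemma discriminant_le_of_quadratic_nonneg:
  fixes A B C :: real
  assumes "0 \<le> B" and nonneg: "\<And>t. 0 \<le> A + 2 * t * C + t\<^sup>2 * B"
  shows "C\<^sup>2 \<le> A * B"
proof (cases "B = 0")
  case True
  have "C = 0"
  proof (rule ccontr)
    assume "C \<noteq> 0"
    then have "A + 2 * (- (A + 1) / (2 * C)) * C + (- (A + 1) / (2 * C))\<^sup>2 * B = -1"
      using True by (simp add: field_simps)
    then show False using nonneg[of "- (A + 1) / (2 * C)"] by simp
  qed
  then show ?thesis using True by simp
next
  case False
  then have "0 < B" using assms(1) by simp
  then have "A + 2 * (- C / B) * C + (- C / B)\<^sup>2 * B = A - C\<^sup>2 / B"
    by (simp add: field_simps power2_eq_square)
  then have "C\<^sup>2 / B \<le> A"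
    using nonneg[of "- C / B"] by simp
  then show ?thesis
    using \<open>0 < B\<close> by (simp add: divide_le_eq mult.commute)
qed

lemma Cauchy_Schwarz_integral:
  fixes a b :: "'a \<Rightarrow> real"
  assumes [measurable]: "a \<in> borel_measurable M" "b \<in> borel_measurable M"
    and a2: "integrable M (\<lambda>\<omega>. (a \<omega>)\<^sup>2)" and b2: "integrable M (\<lambda>\<omega>. (b \<omega>)\<^sup>2)"
  shows "\<bar>\<integral>\<omega>. a \<omega> * b \<omega> \<partial>M\<bar> \<le> sqrt (\<integral>\<omega>. (a \<omega>)\<^sup>2 \<partial>M) * sqrt (\<integral>\<omega>. (b \<omega>)\<^sup>2 \<partial>M)"
proof -
  have ab: "integrable M (\<lambda>\<omega>. a \<omega> * b \<omega>)"
    using a2 b2 by (intro integrable_mult_of_square_integrable) simp_all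
  have "0 \<le> (\<integral>\<omega>. (a \<omega>)\<^sup>2 \<partial>M) + 2 * t * (\<integral>\<omega>. a \<omega> * b \<omega> \<partial>M)
      + t\<^sup>2 * (\<integral>\<omega>. (b \<omega>)\<^sup>2 \<partial>M)" for t
  proof -
    have "0 \<le> (\<integral>\<omega>. (a \<omega> + t * b \<omega>)\<^sup>2 \<partial>M)"
      by simp
    also have "\<dots> = (\<integral>\<omega>. (a \<omega>)\<^sup>2 + (2 * t * (a \<omega> * b \<omega>) + t\<^sup>2 * (b \<omega>)\<^sup>2) \<partial>M)"
      by (intro Bochner_Integration.integral_cong) (simp_all add: power2_sum power_mult_distrib algebra_simps)
    also have "\<dots> = (\<integral>\<omega>. (a \<omega>)\<^sup>2 \<partial>M) + 2 * t * (\<integral>\<omega>. a \<omega> * b \<omega> \<partial>M)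
        + t\<^sup>2 * (\<integral>\<omega>. (b \<omega>)\<^sup>2 \<partial>M)"
      using a2 b2 ab by simp
    finally show ?thesis .
  qed
  then have "(\<integral>\<omega>. a \<omega> * b \<omega> \<partial>M)\<^sup>2 \<le> (\<integral>\<omega>. (a \<omega>)\<^sup>2 \<partial>M) * (\<integral>\<omega>. (b \<omega>)\<^sup>2 \<partial>M)"
    by (intro discriminant_le_of_quadratic_nonneg) simp_all
  then show ?thesis
    using real_sqrt_le_mono by (fastforce simp: real_sqrt_mult)
qed

lemma integrable_square_diff:
  fixes a b :: "'a \<Rightarrow> real"
  assumes [measurable]: "a \<in> borel_measurable M" "b \<in> borel_measurable M"
    and "integrable M (\<lambda>\<omega>. (a \<omega>)\<^sup>2)" "integrable M (\<lambda>\<omega>. (b \<omega>)\<^sup>2)"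
  shows "integrable M (\<lambda>\<omega>. (a \<omega> - b \<omega>)\<^sup>2)"
proof -
  have "integrable M (\<lambda>\<omega>. (a \<omega>)\<^sup>2 + (b \<omega>)\<^sup>2 - 2 * (a \<omega> * b \<omega>))"
    using assms integrable_mult_of_square_integrable[of a M b] by simp
  then show ?thesis by (simp add: power2_diff mult.assoc)
qed

lemma L2_convergence_of_nn_integral:
  fixes f :: "'a \<Rightarrow> real" and S :: "nat \<Rightarrow> 'a \<Rightarrow> real"
  assumes [measurable]: "f \<in> borel_measurable M" "\<And>K. S K \<in> borel_measurable M"
    and S2: "\<And>K. integrable M (\<lambda>x. (S K x)\<^sup>2)"
    and lim: "(\<lambda>K. \<integral>\<^sup>+ x. ennreal ((f x - S K x)\<^sup>2) \<partial>M) \<longlonglongrightarrow> 0"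
  shows "integrable M (\<lambda>x. (f x)\<^sup>2)"
    and "\<And>K. integrable M (\<lambda>x. (f x - S K x)\<^sup>2)"
    and "(\<lambda>K. \<integral>x. (f x - S K x)\<^sup>2 \<partial>M) \<longlonglongrightarrow> 0"
proof -
  obtain K0 where "(\<integral>\<^sup>+ x. ennreal ((f x - S K0 x)\<^sup>2) \<partial>M) < 1"
    using order_tendstoD(2)[OF lim, of 1] by (auto simp: eventually_sequentially)
  then have "integrable M (\<lambda>x. (f x - S K0 x)\<^sup>2)"
    by (intro integrableI_nonneg) (auto simp: top.not_eq_extremum order_less_trans)
  then show f2: "integrable M (\<lambda>x. (f x)\<^sup>2)"
    using integrable_square_diff[of "\<lambda>x. f x - S K0 x" M "\<lambda>x. - S K0 x"] S2[of K0] by simp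
  show fS: "integrable M (\<lambda>x. (f x - S K x)\<^sup>2)" for K
    using f2 S2 by (intro integrable_square_diff) simp_all
  have "ennreal (\<integral>x. (f x - S K x)\<^sup>2 \<partial>M) = (\<integral>\<^sup>+ x. ennreal ((f x - S K x)\<^sup>2) \<partial>M)" for K
    using fS by (intro nn_integral_eq_integral[symmetric]) simp_all
  then have "(\<lambda>K. ennreal (\<integral>x. (f x - S K x)\<^sup>2 \<partial>M)) \<longlonglongrightarrow> ennreal 0"
    using lim by simp
  then show "(\<lambda>K. \<integral>x. (f x - S K x)\<^sup>2 \<partial>M) \<longlonglongrightarrow> 0"
    by (subst (asm) tendsto_ennreal_iff) auto
qed

lemma tendsto_integral_mult_of_L2:
  fixes A B :: "'a \<Rightarrow> real" and A' B' :: "nat \<Rightarrow> 'a \<Rightarrow> real"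
  assumes [measurable]: "A \<in> borel_measurable M" "B \<in> borel_measurable M"
      "\<And>K. A' K \<in> borel_measurable M" "\<And>K. B' K \<in> borel_measurable M"
    and A2: "integrable M (\<lambda>\<omega>. (A \<omega>)\<^sup>2)" and B2: "integrable M (\<lambda>\<omega>. (B \<omega>)\<^sup>2)"
    and dA2: "\<And>K. integrable M (\<lambda>\<omega>. (A \<omega> - A' K \<omega>)\<^sup>2)"
    and dB2: "\<And>K. integrable M (\<lambda>\<omega>. (B \<omega> - B' K \<omega>)\<^sup>2)"
    and limA: "(\<lambda>K. \<integral>\<omega>. (A \<omega> - A' K \<omega>)\<^sup>2 \<partial>M) \<longlonglongrightarrow> 0"
    and limB: "(\<lambda>K. \<integral>\<omega>. (B \<omega> - B' K \<omega>)\<^sup>2 \<partial>M) \<longlonglongrightarrow> 0"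
  shows "(\<lambda>K. \<integral>\<omega>. A' K \<omega> * B' K \<omega> \<partial>M) \<longlonglongrightarrow> (\<integral>\<omega>. A \<omega> * B \<omega> \<partial>M)"
proof -
  define eA where "eA K = (\<integral>\<omega>. (A \<omega> - A' K \<omega>)\<^sup>2 \<partial>M)" for K
  define eB where "eB K = (\<integral>\<omega>. (B \<omega> - B' K \<omega>)\<^sup>2 \<partial>M)" for K
  define nA where "nA = (\<integral>\<omega>. (A \<omega>)\<^sup>2 \<partial>M)"
  define nB where "nB = (\<integral>\<omega>. (B \<omega>)\<^sup>2 \<partial>M)"
  have bound: "\<bar>(\<integral>\<omega>. A' K \<omega> * B' K \<omega> \<partial>M) - (\<integral>\<omega>. A \<omega> * B \<omega> \<partial>M)\<bar>
      \<le> sqrt (eA K) * sqrt (eB K) + sqrt (eA K) * sqrt nB + sqrt nA * sqrt (eB K)" for K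
  proof -
    note int = integrable_mult_of_square_integrable
    have "(\<integral>\<omega>. A' K \<omega> * B' K \<omega> \<partial>M) = (\<integral>\<omega>. (A \<omega> - A' K \<omega>) * (B \<omega> - B' K \<omega>)
        - (A \<omega> - A' K \<omega>) * B \<omega> - A \<omega> * (B \<omega> - B' K \<omega>) + A \<omega> * B \<omega> \<partial>M)"
      by (intro Bochner_Integration.integral_cong) (simp_all add: algebra_simps)
    then have "(\<integral>\<omega>. A' K \<omega> * B' K \<omega> \<partial>M) - (\<integral>\<omega>. A \<omega> * B \<omega> \<partial>M) =
        (\<integral>\<omega>. (A \<omega> - A' K \<omega>) * (B \<omega> - B' K \<omega>) \<partial>M)
        - (\<integral>\<omega>. (A \<omega> - A' K \<omega>) * B \<omega> \<partial>M) - (\<integral>\<omega>. A \<omega> * (B \<omega> - B' K \<omega>) \<partial>M)"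
      using int[OF _ _ dA2 dB2] int[OF _ _ dA2 B2] int[OF _ _ A2 dB2] int[OF _ _ A2 B2] by simp
    moreover have "\<bar>\<integral>\<omega>. (A \<omega> - A' K \<omega>) * (B \<omega> - B' K \<omega>) \<partial>M\<bar> \<le> sqrt (eA K) * sqrt (eB K)"
      unfolding eA_def eB_def by (rule Cauchy_Schwarz_integral[OF _ _ dA2 dB2]) simp_all
    moreover have "\<bar>\<integral>\<omega>. (A \<omega> - A' K \<omega>) * B \<omega> \<partial>M\<bar> \<le> sqrt (eA K) * sqrt nB"
      unfolding eA_def nB_def by (rule Cauchy_Schwarz_integral[OF _ _ dA2 B2]) simp_all
    moreover have "\<bar>\<integral>\<omega>. A \<omega> * (B \<omega> - B' K \<omega>) \<partial>M\<bar> \<le> sqrt nA * sqrt (eB K)"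
      unfolding nA_def eB_def by (rule Cauchy_Schwarz_integral[OF _ _ A2 dB2]) simp_all
    ultimately show ?thesis by arith
  qed
  have "(\<lambda>K. sqrt (eA K) * sqrt (eB K) + sqrt (eA K) * sqrt nB + sqrt nA * sqrt (eB K))
      \<longlonglongrightarrow> 0"
    using limA limB unfolding eA_def eB_def by (auto intro!: tendsto_eq_intros)
  then have "(\<lambda>K. (\<integral>\<omega>. A' K \<omega> * B' K \<omega> \<partial>M) - (\<integral>\<omega>. A \<omega> * B \<omega> \<partial>M)) \<longlonglongrightarrow> 0"
    by (rule Lim_null_comparison[rotated]) (use bound in simp)
  then show ?thesis by (simp add: LIM_zero_iff)
qed

section \<open>Standard Gaussian pairs\<close>

definition std_gaussian_pair :: "'a measure \<Rightarrow> ('a \<Rightarrow> real) \<Rightarrow> ('a \<Rightarrow> real) \<Rightarrow> real \<Rightarrow> bool" where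
  "std_gaussian_pair M Y W \<rho> \<longleftrightarrow>
     prob_space M \<and> Y \<in> borel_measurable M \<and> W \<in> borel_measurable M \<and> \<bar>\<rho>\<bar> \<le> 1 \<and>
     (\<forall>a b. distr M borel (\<lambda>\<omega>. a * Y \<omega> + b * W \<omega>) =
        distr std_normal_distribution borel (\<lambda>z. sqrt (a\<^sup>2 + 2 * a * b * \<rho> + b\<^sup>2) * z))"

lemma centered_gaussian_vector_distr_lincomb:
  assumes gauss: "centered_gaussian_vector M d X R"
    and nonneg: "0 \<le> (\<Sum>i\<in>{1..d}. \<Sum>j\<in>{1..d}. c i * c j * R i j)"
  shows "distr M borel (\<lambda>\<omega>. \<Sum>k\<in>{1..d}. c k * X k \<omega>) =
    distr std_normal_distribution borel (\<lambda>z. sqrt (\<Sum>i\<in>{1..d}. \<Sum>j\<in>{1..d}. c i * c j * R i j) * z)"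
    (is "distr M borel ?V = distr _ borel (\<lambda>z. sqrt ?Q * z)")
proof -
  interpret M: prob_space M
    using gauss by (simp add: centered_gaussian_vector_def)
  interpret N: prob_space std_normal_distribution
    by (rule prob_space_std_normal_distribution)
  have V: "?V \<in> borel_measurable M"
    using gauss unfolding centered_gaussian_vector_def
    by (intro borel_measurable_sum borel_measurable_times borel_measurable_const) auto
  have char_X: "(CLINT \<omega>|M. cis (\<Sum>k\<in>{1..d}. t k * X k \<omega>)) =
      complex_of_real (exp (- (\<Sum>i\<in>{1..d}. \<Sum>j\<in>{1..d}. t i * t j * R i j) / 2))" for t
    using gauss by (simp add: centered_gaussian_vector_def)
  show ?thesis
  proof (rule Levy_uniqueness)
    show "char (distr M borel ?V) = char (distr std_normal_distribution borel (\<lambda>z. sqrt ?Q * z))"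
    proof
      fix t
      have "char (distr M borel ?V) t = (CLINT \<omega>|M. cis (\<Sum>k\<in>{1..d}. (t * c k) * X k \<omega>))"
        using V by (simp add: char_def integral_distr cis_conv_exp sum_distrib_left mult.assoc)
      also have "\<dots> = complex_of_real (exp (- (t\<^sup>2 * ?Q) / 2))"
        unfolding char_X by (simp add: power2_eq_square sum_distrib_left mult_ac)
      also have "\<dots> = char std_normal_distribution (t * sqrt ?Q)"
        using nonneg by (simp add: char_std_normal_distribution power_mult_distrib)
      also have "\<dots> = char (distr std_normal_distribution borel (\<lambda>z. sqrt ?Q * z)) t"
        by (simp add: char_def integral_distr mult_ac)
      finally show "char (distr M borel ?V) t =
          char (distr std_normal_distribution borel (\<lambda>z. sqrt ?Q * z)) t" .
    qed
    show "real_distribution (distr M borel ?V)"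
      using V by (rule M.real_distribution_distr)
    show "real_distribution (distr std_normal_distribution borel (\<lambda>z. sqrt ?Q * z))"
      by (rule N.real_distribution_distr) simp
  qed
qed

lemma sum_two_point_weights:
  fixes F :: "'a \<Rightarrow> 'b::semiring_0"
  assumes "finite A" "i \<in> A" "j \<in> A"
  shows "(\<Sum>k\<in>A. ((if k = i then a else 0) + (if k = j then b else 0)) * F k) = a * F i + b * F j"
proof -
  have "((if k = i then a else 0) + (if k = j then b else 0)) * F k =
      (if k = i then a * F k else 0) + (if k = j then b * F k else 0)" for k
    by (simp add: algebra_simps)
  then show ?thesis
    using assms by (simp add: sum.distrib)
qed

lemma centered_gaussian_vector_std_gaussian_pair:
  assumes gauss: "centered_gaussian_vector M d X R"
    and psd: "\<And>c. 0 \<le> (\<Sum>i\<in>{1..d}. \<Sum>j\<in>{1..d}. c i * c j * R i j)"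
    and ij: "i \<in> {1..d}" "j \<in> {1..d}"
    and diag: "R i i = 1" "R j j = 1" and sym: "R j i = R i j"
  shows "std_gaussian_pair M (X i) (X j) (R i j)"
proof -
  define c where "c a b k = (if k = i then a else 0) + (if k = j then b else 0)" for a b :: real and k
  have lincomb: "(\<Sum>k\<in>{1..d}. c a b k * X k \<omega>) = a * X i \<omega> + b * X j \<omega>" for a b \<omega>
    unfolding c_def using ij by (rule sum_two_point_weights[OF finite_atLeastAtMost])
  have quad: "(\<Sum>k\<in>{1..d}. \<Sum>l\<in>{1..d}. c a b k * c a b l * R k l) = a\<^sup>2 + 2 * a * b * R i j + b\<^sup>2"
    for a b
  proof -
    have "(\<Sum>k\<in>{1..d}. \<Sum>l\<in>{1..d}. c a b k * c a b l * R k l) =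
        (\<Sum>k\<in>{1..d}. c a b k * (\<Sum>l\<in>{1..d}. c a b l * R k l))"
      by (simp add: sum_distrib_left mult.assoc)
    also have "\<dots> = (\<Sum>k\<in>{1..d}. c a b k * (a * R k i + b * R k j))"
      unfolding c_def using ij by (simp add: sum_two_point_weights)
    also have "\<dots> = a * (a * R i i + b * R i j) + b * (a * R j i + b * R j j)"
      unfolding c_def using ij by (simp add: sum_two_point_weights)
    finally show ?thesis
      using diag sym by (simp add: power2_eq_square algebra_simps)
  qed
  have "0 \<le> 2 - 2 * R i j" "0 \<le> 2 + 2 * R i j"
    using psd[of "c 1 (-1)"] psd[of "c 1 1"] unfolding quad by simp_all
  then have "\<bar>R i j\<bar> \<le> 1"
    by linarith
  moreover have "distr M borel (\<lambda>\<omega>. a * X i \<omega> + b * X j \<omega>) =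
      distr std_normal_distribution borel (\<lambda>z. sqrt (a\<^sup>2 + 2 * a * b * R i j + b\<^sup>2) * z)" for a b
    using centered_gaussian_vector_distr_lincomb[OF gauss psd, of "c a b"]
    by (simp only: lincomb quad)
  ultimately show ?thesis
    using gauss ij by (simp add: std_gaussian_pair_def centered_gaussian_vector_def)
qed

lemma std_gaussian_pair_distr_lincomb:
  "std_gaussian_pair M Y W \<rho> \<Longrightarrow> distr M borel (\<lambda>\<omega>. a * Y \<omega> + b * W \<omega>) =
     distr std_normal_distribution borel (\<lambda>z. sqrt (a\<^sup>2 + 2 * a * b * \<rho> + b\<^sup>2) * z)"
  by (simp add: std_gaussian_pair_def)

lemma std_gaussian_pair_swap:
  assumes "std_gaussian_pair M Y W \<rho>"
  shows "std_gaussian_pair M W Y \<rho>"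
proof -
  have "distr M borel (\<lambda>\<omega>. a * W \<omega> + b * Y \<omega>) =
      distr std_normal_distribution borel (\<lambda>z. sqrt (a\<^sup>2 + 2 * a * b * \<rho> + b\<^sup>2) * z)" for a b
  proof -
    have "(\<lambda>\<omega>. a * W \<omega> + b * Y \<omega>) = (\<lambda>\<omega>. b * Y \<omega> + a * W \<omega>)"
      by (simp add: fun_eq_iff)
    moreover have "a\<^sup>2 + 2 * a * b * \<rho> + b\<^sup>2 = b\<^sup>2 + 2 * b * a * \<rho> + a\<^sup>2"
      by simp
    ultimately show ?thesis
      using std_gaussian_pair_distr_lincomb[OF assms, of b a] by (simp only:)
  qed
  then show ?thesis
    using assms by (simp add: std_gaussian_pair_def)
qed

lemma std_gaussian_pair_distr_fst:
  assumes "std_gaussian_pair M Y W \<rho>"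
  shows "distr M borel Y = std_normal_distribution"
proof -
  have "distr M borel (\<lambda>\<omega>. 1 * Y \<omega> + 0 * W \<omega>) =
      distr std_normal_distribution borel (\<lambda>z. sqrt (1\<^sup>2 + 2 * 1 * 0 * \<rho> + 0\<^sup>2) * z)"
    by (rule std_gaussian_pair_distr_lincomb[OF assms])
  then show ?thesis
    by (simp add: distr_id2)
qed

lemma std_gaussian_pair_integral_fst:
  fixes h :: "real \<Rightarrow> real"
  assumes pair: "std_gaussian_pair M Y W \<rho>" and [measurable]: "h \<in> borel_measurable borel"
  shows "(\<integral>\<omega>. h (Y \<omega>) \<partial>M) = (\<integral>x. h x \<partial>std_normal_distribution)"
    and "integrable M (\<lambda>\<omega>. h (Y \<omega>)) \<longleftrightarrow> integrable std_normal_distribution h"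
proof -
  have [measurable]: "Y \<in> borel_measurable M"
    using pair by (simp add: std_gaussian_pair_def)
  show "(\<integral>\<omega>. h (Y \<omega>) \<partial>M) = (\<integral>x. h x \<partial>std_normal_distribution)"
    using integral_distr[of Y M borel h] std_gaussian_pair_distr_fst[OF pair] by simp
  show "integrable M (\<lambda>\<omega>. h (Y \<omega>)) \<longleftrightarrow> integrable std_normal_distribution h"
    using integrable_distr_eq[of Y M borel h] std_gaussian_pair_distr_fst[OF pair] by simp
qed

lemma std_gaussian_pair_integrable_poly_mult:
  fixes p q :: "real poly"
  assumes pair: "std_gaussian_pair M Y W \<rho>"
  shows "integrable M (\<lambda>\<omega>. poly p (Y \<omega>) * poly q (W \<omega>))"
proof (rule integrable_mult_of_square_integrable)
  have [measurable]: "Y \<in> borel_measurable M" "W \<in> borel_measurable M"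
    using pair by (simp_all add: std_gaussian_pair_def)
  show "(\<lambda>\<omega>. poly p (Y \<omega>)) \<in> borel_measurable M" "(\<lambda>\<omega>. poly q (W \<omega>)) \<in> borel_measurable M"
    by simp_all
  show "integrable M (\<lambda>\<omega>. (poly p (Y \<omega>))\<^sup>2)"
    using std_gaussian_pair_integral_fst(2)[OF pair, of "poly (p * p)"]
      integrable_std_normal_distribution_poly[of "p * p"] by (simp add: power2_eq_square)
  show "integrable M (\<lambda>\<omega>. (poly q (W \<omega>))\<^sup>2)"
    using std_gaussian_pair_integral_fst(2)[OF std_gaussian_pair_swap[OF pair], of "poly (q * q)"]
      integrable_std_normal_distribution_poly[of "q * q"] by (simp add: power2_eq_square)
qed

lemma std_gaussian_pair_integral_hermite_poly_add:
  assumes pair: "std_gaussian_pair M Y W \<rho>"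
  shows "(\<integral>\<omega>. poly (hermite_poly (u\<^sup>2 + 1) n) (u * W \<omega> + Y \<omega>) \<partial>M) =
    (if even n then of_nat (n choose (n div 2)) * fact (n div 2) * (u * \<rho>) ^ (n div 2) else 0)"
proof -
  have [measurable]: "Y \<in> borel_measurable M" "W \<in> borel_measurable M" and "\<bar>\<rho>\<bar> \<le> 1"
    using pair by (simp_all add: std_gaussian_pair_def)
  define \<sigma> where "\<sigma> = sqrt (1 + 2 * u * \<rho> + u\<^sup>2)"
  have "\<bar>u * \<rho>\<bar> \<le> \<bar>u\<bar>"
    using \<open>\<bar>\<rho>\<bar> \<le> 1\<close> by (simp add: abs_mult mult_left_le)
  moreover have "0 \<le> 1 - 2 * \<bar>u\<bar> + u\<^sup>2"
    using power2_diff[of 1 "\<bar>u\<bar>"] zero_le_power2[of "1 - \<bar>u\<bar>"] by simp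
  ultimately have "\<sigma>\<^sup>2 = 1 + 2 * u * \<rho> + u\<^sup>2"
    unfolding \<sigma>_def by (intro real_sqrt_pow2) (simp add: abs_le_iff)
  from std_gaussian_pair_distr_lincomb[OF pair, of 1 u]
  have "distr M borel (\<lambda>\<omega>. Y \<omega> + u * W \<omega>) = distr std_normal_distribution borel (\<lambda>z. \<sigma> * z)"
    by (simp add: \<sigma>_def)
  then have "(\<integral>\<omega>. poly (hermite_poly (u\<^sup>2 + 1) n) (u * W \<omega> + Y \<omega>) \<partial>M) =
      (\<integral>z. poly (hermite_poly (u\<^sup>2 + 1) n) (\<sigma> * z) \<partial>std_normal_distribution)"
    using integral_distr[of "\<lambda>\<omega>. Y \<omega> + u * W \<omega>" M borel "poly (hermite_poly (u\<^sup>2 + 1) n)"]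
      integral_distr[of "\<lambda>z. \<sigma> * z" std_normal_distribution borel "poly (hermite_poly (u\<^sup>2 + 1) n)"]
    by (simp add: add.commute)
  also have "\<dots> = (\<integral>z. z ^ n \<partial>std_normal_distribution) * (2 * u * \<rho>) ^ (n div 2)"
    by (simp add: integral_std_normal_distribution_hermite_poly_scaled \<open>\<sigma>\<^sup>2 = _\<close>)
  also have "\<dots> = (if even n then of_nat (n choose (n div 2)) * fact (n div 2) * (u * \<rho>) ^ (n div 2) else 0)"
  proof (cases "even n")
    case True
    then obtain j where "n = 2 * j" by blast
    then show ?thesis
      using std_normal_distribution_even_moments(1)[of j]
      by (simp add: binomial_fact power_mult_distrib mult_2 field_simps)
  qed (simp add: integral_std_normal_distribution_moment_odd)
  finally show ?thesis .
qed

section \<open>Hermite expansions of correlated Gaussians\<close>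

lemma std_gaussian_pair_hermite_orthogonal:
  assumes pair: "std_gaussian_pair M Y W \<rho>"
  shows "(\<integral>\<omega>. hermite k (Y \<omega>) * hermite l (W \<omega>) \<partial>M) = (if k = l then fact k * \<rho> ^ k else 0)"
proof -
  define c where "c k l = (\<integral>\<omega>. poly (hermite_poly 1 k) (Y \<omega>) * poly (hermite_poly 1 l) (W \<omega>) \<partial>M)"
    for k l
  define e where "e n m = (if even n \<and> m = n div 2 then of_nat (n choose m) * fact m * \<rho> ^ m else 0)"
    for n m :: nat
  have coeffs: "of_nat (n choose m) * c (n - m) m = e n m" if "m \<le> n" for n m
  proof -
    \<comment> \<open>Integrate the addition formula against the law of \<open>Y + u W\<close> and compare coefficients in \<open>u\<close>.\<close>
    have "(\<Sum>m\<le>n. (of_nat (n choose m) * c (n - m) m) * u ^ m) = (\<Sum>m\<le>n. e n m * u ^ m)" for u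
    proof -
      have "(\<Sum>m\<le>n. (of_nat (n choose m) * c (n - m) m) * u ^ m) =
          (\<Sum>m\<le>n. \<integral>\<omega>. of_nat (n choose m) * u ^ m *
             (poly (hermite_poly 1 m) (W \<omega>) * poly (hermite_poly 1 (n - m)) (Y \<omega>)) \<partial>M)"
        by (simp add: c_def mult_ac)
      also have "\<dots> = (\<integral>\<omega>. (\<Sum>m\<le>n. of_nat (n choose m) * u ^ m *
             (poly (hermite_poly 1 m) (W \<omega>) * poly (hermite_poly 1 (n - m)) (Y \<omega>))) \<partial>M)"
        using std_gaussian_pair_integrable_poly_mult[OF std_gaussian_pair_swap[OF pair]]
        by (intro Bochner_Integration.integral_sum[symmetric] integrable_mult_right)
      also have "\<dots> = (\<integral>\<omega>. poly (hermite_poly (u\<^sup>2 + 1) n) (u * W \<omega> + Y \<omega>) \<partial>M)"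
        by (simp add: poly_hermite_poly_add poly_hermite_poly_scale mult_ac)
      also have "\<dots> = (\<Sum>m\<le>n. if even n \<and> m = n div 2 then e n m * u ^ m else 0)"
        by (cases "even n")
          (simp_all add: std_gaussian_pair_integral_hermite_poly_add[OF pair] e_def power_mult_distrib)
      also have "\<dots> = (\<Sum>m\<le>n. e n m * u ^ m)"
        by (intro sum.cong) (simp_all add: e_def)
      finally show ?thesis .
    qed
    then show ?thesis
      using that polyfun_eq_coeffs[of "\<lambda>m. of_nat (n choose m) * c (n - m) m" n "e n"] by blast
  qed
  have "(even (k + l) \<and> l = (k + l) div 2) \<longleftrightarrow> k = l"
    by presburger
  then have "of_nat ((k + l) choose l) * c k l =
      (if k = l then of_nat ((k + l) choose l) * (fact k * \<rho> ^ k) else 0)"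
    using coeffs[of l "k + l"] by (simp add: e_def)
  then show ?thesis
    by (simp add: c_def hermite_eq_poly_hermite_poly split: if_splits)
qed

lemma std_gaussian_pair_integral_hermite_sums:
  assumes pair: "std_gaussian_pair M Y W \<rho>" and "finite A"
  shows "(\<integral>\<omega>. (\<Sum>n\<in>A. a n * hermite n (Y \<omega>)) * (\<Sum>m\<in>A. b m * hermite m (W \<omega>)) \<partial>M) =
    (\<Sum>n\<in>A. a n * b n * fact n * \<rho> ^ n)"
proof -
  have int: "integrable M (\<lambda>\<omega>. hermite n (Y \<omega>) * hermite m (W \<omega>))" for n m
    using std_gaussian_pair_integrable_poly_mult[OF pair] by (simp add: hermite_eq_poly_hermite_poly)
  have "(\<integral>\<omega>. (\<Sum>n\<in>A. a n * hermite n (Y \<omega>)) * (\<Sum>m\<in>A. b m * hermite m (W \<omega>)) \<partial>M) =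
      (\<integral>\<omega>. (\<Sum>n\<in>A. \<Sum>m\<in>A. a n * b m * (hermite n (Y \<omega>) * hermite m (W \<omega>))) \<partial>M)"
    by (simp add: sum_product mult_ac)
  also have "\<dots> = (\<Sum>n\<in>A. \<Sum>m\<in>A. a n * b m * (\<integral>\<omega>. hermite n (Y \<omega>) * hermite m (W \<omega>) \<partial>M))"
    using int by (simp add: Bochner_Integration.integral_sum Bochner_Integration.integrable_sum)
  also have "\<dots> = (\<Sum>n\<in>A. a n * b n * fact n * \<rho> ^ n)"
    using \<open>finite A\<close> by (simp add: std_gaussian_pair_hermite_orthogonal[OF pair] if_distrib mult_ac cong: if_cong)
  finally show ?thesis .
qed

lemma std_gaussian_pair_hermite_L2:
  fixes f :: "real \<Rightarrow> real" and a :: "nat \<Rightarrow> real"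
  assumes pair: "std_gaussian_pair M Y W \<rho>" and [measurable]: "f \<in> borel_measurable borel"
    and L2: "(\<lambda>K. \<integral>\<^sup>+ x. ennreal ((f x - (\<Sum>n\<le>K. a n * hermite n x))\<^sup>2) \<partial>std_normal_distribution)
      \<longlonglongrightarrow> 0"
  shows "integrable M (\<lambda>\<omega>. (f (Y \<omega>))\<^sup>2)"
    and "\<And>K. integrable M (\<lambda>\<omega>. (f (Y \<omega>) - (\<Sum>n\<le>K. a n * hermite n (Y \<omega>)))\<^sup>2)"
    and "(\<lambda>K. \<integral>\<omega>. (f (Y \<omega>) - (\<Sum>n\<le>K. a n * hermite n (Y \<omega>)))\<^sup>2 \<partial>M) \<longlonglongrightarrow> 0"
proof -
  define P where "P K = (\<Sum>n\<le>K. smult (a n) (hermite_poly 1 n))" for K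
  have S: "(\<Sum>n\<le>K. a n * hermite n x) = poly (P K) x" for K x
    by (simp add: P_def poly_sum hermite_eq_poly_hermite_poly)
  have "integrable std_normal_distribution (\<lambda>x. (poly (P K) x)\<^sup>2)" for K
    using integrable_std_normal_distribution_poly[of "P K * P K"] by (simp add: power2_eq_square)
  note N = L2_convergence_of_nn_integral[OF _ _ this L2[unfolded S]]
  show "integrable M (\<lambda>\<omega>. (f (Y \<omega>))\<^sup>2)"
    using N(1) std_gaussian_pair_integral_fst(2)[OF pair, of "\<lambda>x. (f x)\<^sup>2"] by simp
  show "integrable M (\<lambda>\<omega>. (f (Y \<omega>) - (\<Sum>n\<le>K. a n * hermite n (Y \<omega>)))\<^sup>2)" for K
    using N(2) std_gaussian_pair_integral_fst(2)[OF pair, of "\<lambda>x. (f x - poly (P K) x)\<^sup>2"]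
    by (simp add: S)
  show "(\<lambda>K. \<integral>\<omega>. (f (Y \<omega>) - (\<Sum>n\<le>K. a n * hermite n (Y \<omega>)))\<^sup>2 \<partial>M) \<longlonglongrightarrow> 0"
  proof -
    have "(\<integral>\<omega>. (f (Y \<omega>) - poly (P K) (Y \<omega>))\<^sup>2 \<partial>M) =
        (\<integral>x. (f x - poly (P K) x)\<^sup>2 \<partial>std_normal_distribution)" for K
      by (rule std_gaussian_pair_integral_fst(1)[OF pair]) simp
    then show ?thesis
      using N(3) by (simp add: S)
  qed
qed

lemma std_gaussian_pair_hermite_expansion_sums:
  fixes f h :: "real \<Rightarrow> real" and a b :: "nat \<Rightarrow> real"
  assumes pair: "std_gaussian_pair M Y W \<rho>"
    and [measurable]: "f \<in> borel_measurable borel" "h \<in> borel_measurable borel"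
    and f_L2: "(\<lambda>K. \<integral>\<^sup>+ x. ennreal ((f x - (\<Sum>n\<le>K. a n * hermite n x))\<^sup>2) \<partial>std_normal_distribution)
      \<longlonglongrightarrow> 0"
    and h_L2: "(\<lambda>K. \<integral>\<^sup>+ x. ennreal ((h x - (\<Sum>n\<le>K. b n * hermite n x))\<^sup>2) \<partial>std_normal_distribution)
      \<longlonglongrightarrow> 0"
  shows "(\<lambda>n. a n * b n * fact n * \<rho> ^ n) sums (\<integral>\<omega>. f (Y \<omega>) * h (W \<omega>) \<partial>M)"
proof -
  have [measurable]: "Y \<in> borel_measurable M" "W \<in> borel_measurable M"
    using pair by (simp_all add: std_gaussian_pair_def)
  note fY = std_gaussian_pair_hermite_L2[OF pair _ f_L2]
  note hW = std_gaussian_pair_hermite_L2[OF std_gaussian_pair_swap[OF pair] _ h_L2]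
  have "(\<lambda>K. \<integral>\<omega>. (\<Sum>n\<le>K. a n * hermite n (Y \<omega>)) * (\<Sum>n\<le>K. b n * hermite n (W \<omega>)) \<partial>M)
      \<longlonglongrightarrow> (\<integral>\<omega>. f (Y \<omega>) * h (W \<omega>) \<partial>M)"
    by (rule tendsto_integral_mult_of_L2[OF _ _ _ _ fY(1) hW(1) fY(2) hW(2) fY(3) hW(3)])
      (simp_all add: hermite_eq_poly_hermite_poly)
  then show ?thesis
    by (simp add: sums_def LIMSEQ_lessThan_iff_atMost std_gaussian_pair_integral_hermite_sums[OF pair])
qed

lemma hermite_0: "hermite 0 x = 1"
  by (simp add: hermite_eq_poly_hermite_poly)

lemma std_gaussian_pair_hermite_expansion_mean:
  fixes f :: "real \<Rightarrow> real" and a :: "nat \<Rightarrow> real"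
  assumes pair: "std_gaussian_pair M Y W \<rho>" and [measurable]: "f \<in> borel_measurable borel"
    and f_L2: "(\<lambda>K. \<integral>\<^sup>+ x. ennreal ((f x - (\<Sum>n\<le>K. a n * hermite n x))\<^sup>2) \<partial>std_normal_distribution)
      \<longlonglongrightarrow> 0"
  shows "(\<integral>\<omega>. f (Y \<omega>) \<partial>M) = a 0"
proof -
  define b where "b n = (if n = 0 then 1 else 0 :: real)" for n :: nat
  have "(\<Sum>n\<le>K. b n * hermite n x) = 1" for K x
    by (induction K) (simp_all add: b_def hermite_0)
  then have "(\<lambda>K. \<integral>\<^sup>+ x. ennreal ((1 - (\<Sum>n\<le>K. b n * hermite n x))\<^sup>2) \<partial>std_normal_distribution)
      \<longlonglongrightarrow> 0"
    by simp
  from std_gaussian_pair_hermite_expansion_sums[OF pair _ _ f_L2 this]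
  have "(\<lambda>n. a n * b n * fact n * \<rho> ^ n) sums (\<integral>\<omega>. f (Y \<omega>) \<partial>M)"
    by simp
  moreover have "(\<lambda>n. a n * b n * fact n * \<rho> ^ n) = (\<lambda>n. if n = 0 then a 0 else 0)"
    by (auto simp: b_def)
  then have "(\<lambda>n. a n * b n * fact n * \<rho> ^ n) sums a 0"
    using sums_single[of 0 "\<lambda>_. a 0"] by simp
  ultimately show ?thesis
    by (rule sums_unique2)
qed

lemma std_gaussian_pair_covariance_hermite_expansion:
  fixes f :: "real \<Rightarrow> real" and a :: "nat \<Rightarrow> real"
  assumes pair: "std_gaussian_pair M Y W \<rho>" and [measurable]: "f \<in> borel_measurable borel"
    and f_L2: "(\<lambda>K. \<integral>\<^sup>+ x. ennreal ((f x - (\<Sum>n\<le>K. a n * hermite n x))\<^sup>2) \<partial>std_normal_distribution)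
      \<longlonglongrightarrow> 0"
    and "a 0 = 0"
  shows "(\<lambda>n. a n * a n * fact n * \<rho> ^ n) sums covariance M (\<lambda>\<omega>. f (Y \<omega>)) (\<lambda>\<omega>. f (W \<omega>))"
  using std_gaussian_pair_hermite_expansion_sums[OF pair _ _ f_L2 f_L2]
    std_gaussian_pair_hermite_expansion_mean[OF pair _ f_L2]
    std_gaussian_pair_hermite_expansion_mean[OF std_gaussian_pair_swap[OF pair] _ f_L2] \<open>a 0 = 0\<close>
  by (simp add: covariance_def)

definition hermite_coeff :: "(nat \<Rightarrow> real) \<Rightarrow> (nat \<Rightarrow> real) \<Rightarrow> nat \<Rightarrow> real" where
  "hermite_coeff \<epsilon> p n = (if n = 0 then 0 else \<epsilon> n * sqrt (p n) / sqrt (fact n))"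

lemma sum_hermite_coeff_hermite:
  fixes N :: nat
  shows "(\<Sum>n\<le>N. hermite_coeff \<epsilon> p n * hermite n x) =
   (\<Sum>n=1..N. \<epsilon> n * sqrt (p n) * hermite n x / sqrt (fact n))"
  by (simp add: atMost_atLeast0 sum.atLeast_Suc_atMost hermite_coeff_def)

lemma sums_hermite_coeff_square_power:
  fixes p \<epsilon> :: "nat \<Rightarrow> real" and r :: real
  assumes p_nonneg: "\<And>n. n \<ge> 1 \<Longrightarrow> p n \<ge> 0" and p_sum: "summable (\<lambda>n. p (n + 1))"
    and eps: "\<And>n. n \<ge> 1 \<Longrightarrow> \<epsilon> n \<in> {-1, 1}" and r: "\<bar>r\<bar> \<le> 1"
  shows "(\<lambda>n. hermite_coeff \<epsilon> p n * hermite_coeff \<epsilon> p n * fact n * r ^ n) sums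
    (\<Sum>n. p (n + 1) * r ^ (n + 1))"
proof -
  have coeff: "hermite_coeff \<epsilon> p n * hermite_coeff \<epsilon> p n * fact n * r ^ n =
      (if n = 0 then 0 else p n * r ^ n)" for n
    using p_nonneg[of n] eps[of n] by (auto simp: hermite_coeff_def)
  have "summable (\<lambda>n. p (n + 1) * r ^ (n + 1))"
  proof (rule summable_comparison_test'[OF p_sum])
    show "norm (p (n + 1) * r ^ (n + 1)) \<le> p (n + 1)" for n
    proof -
      have "\<bar>r\<bar> ^ (n + 1) \<le> 1"
        using r by (intro power_le_one) auto
      then show ?thesis
        using p_nonneg[of "n + 1"] by (simp add: abs_mult power_abs mult_left_le del: power_Suc)
    qed
  qed
  then have "(\<lambda>n. p (Suc n) * r ^ Suc n) sums (\<Sum>n. p (n + 1) * r ^ (n + 1))"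
    by (simp add: summable_sums)
  then show ?thesis
    unfolding coeff using sums_Suc_iff[of "\<lambda>n. if n = 0 then 0 else p n * r ^ n"] by simp
qed

theorem corollary4p3:
  fixes p :: "nat \<Rightarrow> real" and g :: "real \<Rightarrow> real"
    and d :: nat and R :: "nat \<Rightarrow> nat \<Rightarrow> real"
    and \<epsilon> :: "nat \<Rightarrow> real" and f :: "real \<Rightarrow> real"
    and M :: "'a measure" and X :: "nat \<Rightarrow> 'a \<Rightarrow> real"
  assumes p_nonneg: "\<And>n. n \<ge> 1 \<Longrightarrow> p n \<ge> 0"
    and p_sum: "(\<lambda>n. p (n + 1)) sums 1"
    and g_def: "\<And>r. r \<in> {-1..1} \<Longrightarrow> g r = (\<Sum>n. p (n + 1) * r ^ (n + 1))"
    and R_sym: "\<And>i j. i \<in> {1..d} \<Longrightarrow> j \<in> {1..d} \<Longrightarrow> R i j = R j i"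
    and R_psd: "\<And>c :: nat \<Rightarrow> real. (\<Sum>i\<in>{1..d}. \<Sum>j\<in>{1..d}. c i * c j * R i j) \<ge> 0"
    and R_diag: "\<And>i. i \<in> {1..d} \<Longrightarrow> R i i = 1"
    and eps: "\<And>n. n \<ge> 1 \<Longrightarrow> \<epsilon> n \<in> {-1, 1}"
    and f_meas: "f \<in> borel_measurable borel"
    and f_L2: "(\<lambda>N. \<integral>\<^sup>+ x. ennreal ((f x - (\<Sum>n=1..N. \<epsilon> n * sqrt (p n) * hermite n x / sqrt (fact n)))\<^sup>2)
                   \<partial>std_normal_distribution) \<longlonglongrightarrow> 0"
    and gauss: "centered_gaussian_vector M d X R"
  shows "\<forall>i\<in>{1..d}. \<forall>j\<in>{1..d}.
           integrable M (\<lambda>\<omega>. (f (X i \<omega>))\<^sup>2) \<and>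
           covariance M (\<lambda>\<omega>. f (X i \<omega>)) (\<lambda>\<omega>. f (X j \<omega>)) = g (R i j) \<and>
           correlation M (\<lambda>\<omega>. f (X i \<omega>)) (\<lambda>\<omega>. f (X j \<omega>)) = g (R i j)"
proof -
  define a where "a = hermite_coeff \<epsilon> p"
  have f_hermite: "(\<lambda>K. \<integral>\<^sup>+ x. ennreal ((f x - (\<Sum>n\<le>K. a n * hermite n x))\<^sup>2) \<partial>std_normal_distribution)
      \<longlonglongrightarrow> 0"
    using f_L2 by (simp add: a_def sum_hermite_coeff_hermite)
  have pair: "std_gaussian_pair M (X i) (X j) (R i j)" if "i \<in> {1..d}" "j \<in> {1..d}" for i j
    using centered_gaussian_vector_std_gaussian_pair[OF gauss R_psd that] R_diag R_sym that by simp
  have cov: "covariance M (\<lambda>\<omega>. f (X i \<omega>)) (\<lambda>\<omega>. f (X j \<omega>)) = g (R i j)"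
    if "i \<in> {1..d}" "j \<in> {1..d}" for i j
  proof -
    have "\<bar>R i j\<bar> \<le> 1"
      using pair[OF that] by (simp add: std_gaussian_pair_def)
    then have "(\<lambda>n. a n * a n * fact n * R i j ^ n) sums g (R i j)"
      using sums_hermite_coeff_square_power[OF p_nonneg _ eps] p_sum g_def
      by (simp add: a_def sums_iff abs_le_iff)
    then show ?thesis
      using std_gaussian_pair_covariance_hermite_expansion[OF pair[OF that] f_meas f_hermite]
      by (simp add: a_def hermite_coeff_def sums_unique2)
  qed
  have "g 1 = 1"
    using g_def[of 1] p_sum by (simp add: sums_iff)
  then show ?thesis
    using cov R_diag std_gaussian_pair_hermite_L2(1)[OF pair f_meas f_hermite]
    by (simp add: correlation_def)
qed

end
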